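(* For every integer $m\ge2$ and every $\alpha\in[0,1]$, no randomized social choice rule whose output distribution depends only on the plurality scores $(\mathrm{plu}(c))_{c\in C}$ has distortion smaller than $2+\alpha-2/m$ on $\alpha$-decisive metric spaces.
   Context: An election: voters $V=\{1,\dots,n\}$, a fixed finite set $C$ of $m$ candidates, a profile of linear orders over $C$; $\mathrm{top}(i)$ is $i$'s first choice; $\mathrm{plu}(c)=|\{i:\mathrm{top}(i)=c\}|$ (plurality score). A distance function $d$ on $V\cup C$ is nonnegative, symmetric and satisfies the triangle inequality (co-location allowed); consistent with the profile if $d(i,c)\le d(i,c')$ whenever $i$ ranks $c$ above $c'$; $\alpha$-decisive if $d(i,\mathrm{top}(i))\le\alpha\,d(i,c)$ for all $i$ and $c\ne\mathrm{top}(i)$. $\mathrm{SC}(c)=\sum_i d(i,c)$. A randomized rule maps profiles (any number of voters) to probability distributions over $C$; its distortion on $\alpha$-decisive spaces is $\sup_\sigma\sup_d\mathbb{E}[\mathrm{SC}(f(\sigma))]/\min_c\mathrm{SC}(c)$ over $\alpha$-decisive consistent $d$. *)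

theory Defs
  imports "HOL-Probability.Probability"
begin

text \<open>Candidates form a finite type 'c (m = CARD('c)). A ranking (linear order over
  the candidates) is a duplicate-free list enumerating all candidates, best first.
  A profile is a list of rankings; voter i (i < length P) has ranking P ! i.\<close>

definition is_ranking :: "'c::finite list \<Rightarrow> bool" where
  "is_ranking r \<longleftrightarrow> distinct r \<and> set r = UNIV"

definition is_profile :: "'c::finite list list \<Rightarrow> bool" where
  "is_profile P \<longleftrightarrow> (\<forall>r\<in>set P. is_ranking r)"

definition top_choice :: "'c list \<Rightarrow> 'c" where
  "top_choice r = hd r"

definition ranks_above :: "'c list \<Rightarrow> 'c \<Rightarrow> 'c \<Rightarrow> bool" where
  "ranks_above r c c' \<longleftrightarrow> (\<exists>i j. i < j \<and> j < length r \<and> r ! i = c \<and> r ! j = c')"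

definition plu :: "'c list list \<Rightarrow> 'c \<Rightarrow> nat" where
  "plu P c = card {i. i < length P \<and> top_choice (P ! i) = c}"

text \<open>Points of V \<union> C: voter i is Inl i, candidate c is Inr c.\<close>
definition points :: "'c list list \<Rightarrow> (nat + 'c) set" where
  "points P = Inl ` {..<length P} \<union> range Inr"

definition is_distance :: "'c list list \<Rightarrow> (nat + 'c \<Rightarrow> nat + 'c \<Rightarrow> real) \<Rightarrow> bool" where
  "is_distance P d \<longleftrightarrow>
     (\<forall>x\<in>points P. d x x = 0) \<and>
     (\<forall>x\<in>points P. \<forall>y\<in>points P. 0 \<le> d x y \<and> d x y = d y x) \<and>
     (\<forall>x\<in>points P. \<forall>y\<in>points P. \<forall>z\<in>points P. d x z \<le> d x y + d y z)"

definition consistent :: "'c list list \<Rightarrow> (nat + 'c \<Rightarrow> nat + 'c \<Rightarrow> real) \<Rightarrow> bool" where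
  "consistent P d \<longleftrightarrow>
     (\<forall>i<length P. \<forall>c c'. ranks_above (P ! i) c c' \<longrightarrow> d (Inl i) (Inr c) \<le> d (Inl i) (Inr c'))"

definition decisive :: "real \<Rightarrow> 'c list list \<Rightarrow> (nat + 'c \<Rightarrow> nat + 'c \<Rightarrow> real) \<Rightarrow> bool" where
  "decisive \<alpha> P d \<longleftrightarrow>
     (\<forall>i<length P. \<forall>c. c \<noteq> top_choice (P ! i) \<longrightarrow>
        d (Inl i) (Inr (top_choice (P ! i))) \<le> \<alpha> * d (Inl i) (Inr c))"

definition SC :: "'c list list \<Rightarrow> (nat + 'c \<Rightarrow> nat + 'c \<Rightarrow> real) \<Rightarrow> 'c \<Rightarrow> real" where
  "SC P d c = (\<Sum>i<length P. d (Inl i) (Inr c))"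

definition plurality_based :: "('c::finite list list \<Rightarrow> 'c pmf) \<Rightarrow> bool" where
  "plurality_based f \<longleftrightarrow>
     (\<forall>P Q. is_profile P \<longrightarrow> is_profile Q \<longrightarrow> (\<forall>c. plu P c = plu Q c) \<longrightarrow> f P = f Q)"

text \<open>Distortion on alpha-decisive spaces, as an extended real. The ratio is taken
  in ereal, so a positive expected cost over an optimum cost of 0 counts as \<infinity>
  (and 0/0 counts as 0).\<close>
definition distortion :: "real \<Rightarrow> ('c::finite list list \<Rightarrow> 'c pmf) \<Rightarrow> ereal" where
  "distortion \<alpha> f =
     (SUP Pd \<in> {(P, d). is_profile P \<and> P \<noteq> [] \<and> is_distance P d \<and> consistent P d \<and> decisive \<alpha> P d}.
        ereal (measure_pmf.expectation (f (fst Pd)) (SC (fst Pd) (snd Pd)))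
        / ereal (Min (range (SC (fst Pd) (snd Pd)))))"

end

theory Submission
  imports Defs
begin

(* Take one voter per candidate t, ranking t first and a fixed candidate a second. All
   plurality scores are 1 whatever a is, so a plurality-based rule returns the same lottery p
   for every choice of a, and a can be chosen with p(a) <= 1/m.  Embed everything in l1 on
   R^C: candidate c <> a at (1 + alpha) e_c, the voter with top t <> a at e_t, and a together
   with its voter at the origin.  The voter with top t is then at distance alpha from t, 1 from
   a and 2 + alpha from every other candidate, so the metric is consistent and alpha-decisive.
   Now SC(a) = m - 1 while every other candidate costs m - 1 + (m (1 + alpha) - 2), so the
   expected cost is at least (m - 1) + (1 - 1/m) (m (1 + alpha) - 2), which is
   (2 + alpha - 2/m) times the optimum. *)

definition move_front :: "'a \<Rightarrow> 'a list \<Rightarrow> 'a list" where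
  "move_front x xs = x # filter (\<lambda>y. y \<noteq> x) xs"

lemma distinct_move_front [simp]: "distinct xs \<Longrightarrow> distinct (move_front x xs)"
  by (simp add: move_front_def)

lemma set_move_front [simp]: "set (move_front x xs) = insert x (set xs)"
  by (auto simp: move_front_def)

lemma top_choice_move_front [simp]: "top_choice (move_front x xs) = x"
  by (simp add: top_choice_def move_front_def)

lemma is_ranking_move_front: "is_ranking r \<Longrightarrow> is_ranking (move_front x r)"
  by (simp add: is_ranking_def)

lemma ranks_above_nth_imp_in_take:
  assumes "distinct r" "k < length r" "ranks_above r c (r ! k)"
  shows "c \<in> set (take k r)"
proof -
  obtain i j where ij: "i < j" "j < length r" "r ! i = c" "r ! j = r ! k"
    using assms(3) unfolding ranks_above_def by blast
  have "j = k" using ij(2,4) assms(1,2) by (simp add: nth_eq_iff_index_eq)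
  then show ?thesis using ij by (auto simp: in_set_conv_nth)
qed

lemma ranks_above_move_front_move_front:
  assumes "distinct xs" "ranks_above (move_front t (move_front a xs)) c c'"
  shows "c' \<noteq> t" and "c' = a \<Longrightarrow> c = t"
proof -
  let ?r = "move_front t (move_front a xs)"
  have r: "distinct ?r" "?r ! 0 = t" "0 < length ?r"
    using assms(1) by (simp_all add: move_front_def)
  show "c' \<noteq> t"
    using ranks_above_nth_imp_in_take[OF r(1,3), of c] assms(2) r(2) by auto
  assume "c' = a"
  with \<open>c' \<noteq> t\<close> have "?r ! 1 = a" "1 < length ?r"
    by (simp_all add: move_front_def)
  then show "c = t"
    using ranks_above_nth_imp_in_take[OF r(1), of 1 c] assms(2) r(2) \<open>c' = a\<close>
    by (simp add: move_front_def)
qed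

lemma plu_eq_if_tops_eq:
  assumes "map top_choice P = map top_choice Q"
  shows "plu P = plu Q"
proof -
  have "length P = length Q" using map_eq_imp_length_eq[OF assms] .
  moreover have "top_choice (P ! i) = top_choice (Q ! i)" if "i < length P" for i
    using that assms by (metis nth_map \<open>length P = length Q\<close>)
  ultimately show ?thesis
    unfolding plu_def by (intro ext arg_cong[where f = card]) auto
qed

lemma plurality_based_eq:
  assumes "plurality_based f" "is_profile P" "is_profile Q" "map top_choice P = map top_choice Q"
  shows "f P = f Q"
  using assms plu_eq_if_tops_eq unfolding plurality_based_def by metis

definition l1_dist :: "('p \<Rightarrow> 'k::finite \<Rightarrow> real) \<Rightarrow> 'p \<Rightarrow> 'p \<Rightarrow> real" where
  "l1_dist emb x y = (\<Sum>k\<in>UNIV. \<bar>emb x k - emb y k\<bar>)"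

lemma is_distance_l1_dist: "is_distance P (l1_dist emb)"
proof -
  have "l1_dist emb x z \<le> l1_dist emb x y + l1_dist emb y z" for x y z
    unfolding l1_dist_def sum.distrib[symmetric] by (rule sum_mono) linarith
  moreover have "l1_dist emb x x = 0" "0 \<le> l1_dist emb x y" "l1_dist emb x y = l1_dist emb y x"
    for x y by (auto simp: l1_dist_def sum_nonneg abs_minus_commute)
  ultimately show ?thesis
    unfolding is_distance_def by blast
qed

lemma l1_dist_point_masses:
  fixes u v :: real and s t :: "'k::finite"
  assumes "0 \<le> u" "0 \<le> v"
  shows "(\<Sum>k\<in>UNIV. \<bar>(if k = s then u else 0) - (if k = t then v else 0)\<bar>)
         = (if s = t then \<bar>u - v\<bar> else u + v)"
proof (cases "s = t")
  case True
  then have "\<bar>(if k = s then u else 0) - (if k = t then v else 0)\<bar>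
             = (if k = t then \<bar>u - v\<bar> else 0)" for k
    by simp
  then show ?thesis using True by simp
next
  case False
  then have "\<bar>(if k = s then u else 0) - (if k = t then v else 0)\<bar>
             = (if k = s then u else 0) + (if k = t then v else 0)" for k
    using assms by auto
  then show ?thesis using False by (simp add: sum.distrib)
qed

lemma ex_pmf_le_inverse_card:
  fixes p :: "'a::finite pmf"
  shows "\<exists>a. pmf p a \<le> 1 / real CARD('a)"
proof -
  have "Min (range (pmf p)) \<in> range (pmf p)" by (rule Min_in) (simp_all add: finite_imageI)
  then obtain a where a: "pmf p a = Min (range (pmf p))" by (metis rangeE)
  then have "(\<Sum>x\<in>(UNIV::'a set). pmf p a) \<le> (\<Sum>x\<in>UNIV. pmf p x)"
    by (intro sum_mono) simp
  also have "\<dots> = 1" by (rule sum_pmf_eq_1) auto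
  finally show ?thesis by (auto simp: field_simps)
qed

lemma expectation_const_off_point:
  fixes p :: "'a pmf" and A K :: real
  shows "measure_pmf.expectation p (\<lambda>x. A + (if x = a then 0 else K)) = A + K * (1 - pmf p a)"
proof -
  have "(\<lambda>x. A + (if x = a then 0 else K)) = (\<lambda>x. (A + K) - K * indicator {a} x)"
    by (auto simp: indicator_def)
  moreover have "integrable (measure_pmf p) (\<lambda>x. K * indicator {a} x :: real)"
    by (intro integrable_mult_right integrable_real_indicator)
       (simp_all add: less_top[symmetric])
  ultimately show ?thesis
    by (simp add: integral_diff measure_pmf_single algebra_simps)
qed

lemma Min_range_const_off_point:
  fixes A K :: real
  assumes "0 \<le> K"
  shows "Min (range (\<lambda>x::'a::finite. A + (if x = a then 0 else K))) = A"
  using assms by (intro Min_eqI) auto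

lemma distortion_ge_ratio:
  assumes "is_profile P" "P \<noteq> []" "is_distance P d" "consistent P d" "decisive \<alpha> P d"
  shows "ereal (measure_pmf.expectation (f P) (SC P d)) / ereal (Min (range (SC P d)))
         \<le> distortion \<alpha> f"
  unfolding distortion_def using assms by (intro SUP_upper2[where i = "(P, d)"]) auto

definition voter_cost :: "real \<Rightarrow> 'c \<Rightarrow> 'c \<Rightarrow> 'c \<Rightarrow> real" where
  "voter_cost \<alpha> a t c =
     (if c = t \<and> t \<noteq> a then \<alpha> else (if t = a then 0 else 1) + (if c = a then 0 else 1 + \<alpha>))"

lemma voter_cost_mono:
  assumes "0 \<le> \<alpha>" "\<alpha> \<le> 1" "c' \<noteq> t" "c' = a \<Longrightarrow> c = t"
  shows "voter_cost \<alpha> a t c \<le> voter_cost \<alpha> a t c'"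
  using assms by (auto simp: voter_cost_def)

lemma voter_cost_top_le:
  assumes "0 \<le> \<alpha>" "c \<noteq> t"
  shows "voter_cost \<alpha> a t t \<le> \<alpha> * voter_cost \<alpha> a t c"
proof -
  have "\<alpha> * 1 \<le> \<alpha> * (1 + (if c = a then 0 else 1 + \<alpha>))"
    using assms(1) by (intro mult_left_mono) auto
  then show ?thesis
    using assms by (auto simp: voter_cost_def)
qed

lemma sum_voter_cost:
  "(\<Sum>t\<in>UNIV. voter_cost \<alpha> a t (c::'c::finite))
     = (real CARD('c) - 1) + (if c = a then 0 else real CARD('c) * (1 + \<alpha>) - 2)"
proof -
  have cost: "voter_cost \<alpha> a t c = (1 - (if t = a then 1 else 0)) + (if c = a then 0 else 1 + \<alpha>)
          - (if c \<noteq> a \<and> t = c then 2 else 0)" for t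
    by (auto simp: voter_cost_def)
  show ?thesis
    unfolding cost by (simp add: sum_subtractf sum.distrib algebra_simps)
qed

definition runner_up_embedding :: "'c list \<Rightarrow> real \<Rightarrow> 'c \<Rightarrow> nat + 'c \<Rightarrow> 'c \<Rightarrow> real" where
  "runner_up_embedding cs \<alpha> a p k = (case p of
      Inl i \<Rightarrow> if k = cs ! i then (if k = a then 0 else 1) else 0
    | Inr c \<Rightarrow> if k = c then (if k = a then 0 else 1 + \<alpha>) else 0)"

lemma l1_dist_runner_up_embedding:
  fixes cs :: "'c::finite list"
  assumes "0 \<le> \<alpha>"
  shows "l1_dist (runner_up_embedding cs \<alpha> a) (Inl i) (Inr c) = voter_cost \<alpha> a (cs ! i) c"
proof -
  let ?u = "if cs ! i = a then 0 else 1 :: real" and ?v = "if c = a then 0 else 1 + \<alpha>"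
  have "l1_dist (runner_up_embedding cs \<alpha> a) (Inl i) (Inr c)
        = (\<Sum>k\<in>UNIV. \<bar>(if k = cs ! i then ?u else 0) - (if k = c then ?v else 0)\<bar>)"
    unfolding l1_dist_def runner_up_embedding_def by (intro sum.cong) auto
  also have "\<dots> = (if cs ! i = c then \<bar>?u - ?v\<bar> else ?u + ?v)"
    using assms by (intro l1_dist_point_masses) auto
  also have "\<dots> = voter_cost \<alpha> a (cs ! i) c"
    using assms by (auto simp: voter_cost_def)
  finally show ?thesis .
qed

definition runner_up_profile :: "'c list \<Rightarrow> 'c \<Rightarrow> 'c list list" where
  "runner_up_profile cs a = map (\<lambda>t. move_front t (move_front a cs)) cs"

lemma length_runner_up_profile [simp]: "length (runner_up_profile cs a) = length cs"
  by (simp add: runner_up_profile_def)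

lemma nth_runner_up_profile [simp]:
  "i < length cs \<Longrightarrow> runner_up_profile cs a ! i = move_front (cs ! i) (move_front a cs)"
  by (simp add: runner_up_profile_def)

lemma map_top_choice_runner_up_profile: "map top_choice (runner_up_profile cs a) = cs"
  by (simp add: runner_up_profile_def map_idI)

lemma is_profile_runner_up_profile:
  "is_ranking cs \<Longrightarrow> is_profile (runner_up_profile cs a)"
  by (auto simp: is_profile_def runner_up_profile_def intro!: is_ranking_move_front)

lemma consistent_runner_up:
  assumes "is_ranking cs" "0 \<le> \<alpha>" "\<alpha> \<le> 1"
  shows "consistent (runner_up_profile cs a) (l1_dist (runner_up_embedding cs \<alpha> a))"
  unfolding consistent_def
proof (intro allI impI)
  fix i c c' assume i: "i < length (runner_up_profile cs a)"
    and above: "ranks_above (runner_up_profile cs a ! i) c c'"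
  have "distinct cs" using assms(1) by (simp add: is_ranking_def)
  moreover have "ranks_above (move_front (cs ! i) (move_front a cs)) c c'"
    using above i by simp
  ultimately have "c' \<noteq> cs ! i" "c' = a \<Longrightarrow> c = cs ! i"
    by (rule ranks_above_move_front_move_front)+
  then show "l1_dist (runner_up_embedding cs \<alpha> a) (Inl i) (Inr c)
             \<le> l1_dist (runner_up_embedding cs \<alpha> a) (Inl i) (Inr c')"
    using assms(2,3) by (simp add: l1_dist_runner_up_embedding voter_cost_mono)
qed

lemma decisive_runner_up:
  assumes "0 \<le> \<alpha>"
  shows "decisive \<alpha> (runner_up_profile cs a) (l1_dist (runner_up_embedding cs \<alpha> a))"
  using assms by (auto simp: decisive_def l1_dist_runner_up_embedding voter_cost_top_le)

lemma SC_runner_up: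
  fixes cs :: "'c::finite list"
  assumes "is_ranking cs" "0 \<le> \<alpha>"
  shows "SC (runner_up_profile cs a) (l1_dist (runner_up_embedding cs \<alpha> a)) c
         = (real CARD('c) - 1) + (if c = a then 0 else real CARD('c) * (1 + \<alpha>) - 2)"
proof -
  have "SC (runner_up_profile cs a) (l1_dist (runner_up_embedding cs \<alpha> a)) c
        = (\<Sum>i<length cs. voter_cost \<alpha> a (cs ! i) c)"
    using assms(2) by (simp add: SC_def l1_dist_runner_up_embedding)
  also have "\<dots> = (\<Sum>t\<in>UNIV. voter_cost \<alpha> a t c)"
    using assms(1) sum.reindex_bij_betw[OF bij_betw_nth, of cs "{..<length cs}" UNIV]
    by (simp add: is_ranking_def lessThan_def)
  finally show ?thesis by (simp add: sum_voter_cost)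
qed

lemma runner_up_gap_nonneg:
  fixes m \<alpha> :: real
  assumes "2 \<le> m" "0 \<le> \<alpha>"
  shows "0 \<le> m * (1 + \<alpha>) - 2"
proof -
  have "2 * 1 \<le> m * (1 + \<alpha>)" using assms by (intro mult_mono) auto
  then show ?thesis by simp
qed

lemma distortion_ge_runner_up:
  fixes cs :: "'c::finite list" and f :: "'c list list \<Rightarrow> 'c pmf"
  assumes "is_ranking cs" "CARD('c) \<ge> 2" "0 \<le> \<alpha>" "\<alpha> \<le> 1"
  defines "m \<equiv> real CARD('c)" and "K \<equiv> real CARD('c) * (1 + \<alpha>) - 2"
  shows "ereal (((m - 1) + K * (1 - pmf (f (runner_up_profile cs a)) a)) / (m - 1))
         \<le> distortion \<alpha> f"
proof -
  let ?P = "runner_up_profile cs a" and ?d = "l1_dist (runner_up_embedding cs \<alpha> a)"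
  have "length cs = CARD('c)"
    using assms(1) distinct_card by (fastforce simp: is_ranking_def)
  then have "?P \<noteq> []"
    using assms(2) by (auto simp: runner_up_profile_def)
  then have "ereal (measure_pmf.expectation (f ?P) (SC ?P ?d)) / ereal (Min (range (SC ?P ?d)))
             \<le> distortion \<alpha> f"
    using assms(1,3,4)
    by (intro distortion_ge_ratio is_profile_runner_up_profile is_distance_l1_dist
        consistent_runner_up decisive_runner_up)
  moreover have SC: "SC ?P ?d = (\<lambda>c. (m - 1) + (if c = a then 0 else K))"
    using assms(1,3) by (simp add: SC_runner_up m_def K_def fun_eq_iff)
  moreover have "0 \<le> K"
    using assms(2,3) unfolding K_def by (intro runner_up_gap_nonneg) auto
  ultimately show ?thesis
    using assms(2) by (simp add: m_def expectation_const_off_point Min_range_const_off_point)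
qed

lemma runner_up_ratio_bound:
  fixes m \<alpha> q :: real
  assumes "2 \<le> m" "0 \<le> \<alpha>" "q \<le> 1 / m"
  shows "2 + \<alpha> - 2 / m \<le> ((m - 1) + (m * (1 + \<alpha>) - 2) * (1 - q)) / (m - 1)"
proof -
  define K where "K = m * (1 + \<alpha>) - 2"
  have "K * q \<le> K / m"
    using mult_left_mono[OF assms(3) runner_up_gap_nonneg[OF assms(1,2)]] by (simp add: K_def)
  moreover have "(2 + \<alpha> - 2 / m) * (m - 1) = (m - 1) + K - K / m"
    using assms(1) unfolding K_def by (simp add: field_simps)
  ultimately have "(2 + \<alpha> - 2 / m) * (m - 1) \<le> (m - 1) + K * (1 - q)"
    by (simp add: algebra_simps)
  then show ?thesis using assms(1) unfolding K_def by (simp add: pos_le_divide_eq)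
qed

theorem theorem4:
  fixes f :: "'c::finite list list \<Rightarrow> 'c pmf" and \<alpha> :: real
  assumes "CARD('c) \<ge> 2" and "0 \<le> \<alpha>" and "\<alpha> \<le> 1" and "plurality_based f"
  shows "distortion \<alpha> f \<ge> ereal (2 + \<alpha> - 2 / real CARD('c))"
proof -
  obtain cs :: "'c list" where cs: "is_ranking cs"
    using finite_distinct_list[of "UNIV :: 'c set"] by (auto simp: is_ranking_def)
  define p where "p = f (runner_up_profile cs (hd cs))"
  have f_eq: "f (runner_up_profile cs a) = p" for a
    unfolding p_def using assms(4) cs
    by (intro plurality_based_eq)
       (simp_all add: is_profile_runner_up_profile map_top_choice_runner_up_profile)
  obtain a where a: "pmf p a \<le> 1 / real CARD('c)"
    using ex_pmf_le_inverse_card by blast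
  have "ereal (2 + \<alpha> - 2 / real CARD('c))
        \<le> ereal (((real CARD('c) - 1) + (real CARD('c) * (1 + \<alpha>) - 2) * (1 - pmf p a))
                  / (real CARD('c) - 1))"
    using assms(1,2) a by (simp add: runner_up_ratio_bound)
  also have "\<dots> \<le> distortion \<alpha> f"
    using distortion_ge_runner_up[OF cs assms(1-3), of f a] by (simp add: f_eq)
  finally show ?thesis .
qed

end
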